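(* Let $\mathcal{H}$ be a real Hilbert space and let $C\subset\mathcal{H}$ be a nonempty, closed and convex set with $0\in C$. Then a function $f\in\Gamma_0(\mathcal{H})$ satisfies $$\Vert \operatorname{prox}_f(x)\Vert = d_C(x)\quad\text{for all } x\in\mathcal{H}$$ if and only if $f=\sigma_C+c$ for some constant $c\in\mathbb{R}$.
   Context: $\Gamma_0(\mathcal{H})$ denotes the set of proper, convex, lower semicontinuous functions $\mathcal{H}\to\mathbb{R}\cup\{+\infty\}$. $\operatorname{prox}_f(x)=\operatorname{argmin}_{y\in\mathcal{H}}\{f(y)+\tfrac12\Vert x-y\Vert^2\}$. $d_C(x)=\inf_{c\in C}\Vert x-c\Vert$ is the distance function to $C$, and $\sigma_C(x)=\sup_{y\in C}\langle y,x\rangle$ is the support function of $C$. *)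

theory Defs
  imports "HOL-Analysis.Analysis" "HOL-Library.Extended_Real"
begin

text \<open>Extended-real-valued functions H -> R union {+infinity}; a value -infinity is excluded by properness.\<close>

definition proper_fun :: "('a \<Rightarrow> ereal) \<Rightarrow> bool" where
  "proper_fun f \<longleftrightarrow> (\<forall>x. f x \<noteq> -\<infinity>) \<and> (\<exists>x. f x \<noteq> \<infinity>)"

definition convex_fun :: "('a::real_vector \<Rightarrow> ereal) \<Rightarrow> bool" where
  "convex_fun f \<longleftrightarrow> (\<forall>x y. \<forall>u::real. 0 \<le> u \<and> u \<le> 1 \<longrightarrow>
      f ((1 - u) *\<^sub>R x + u *\<^sub>R y) \<le> ereal (1 - u) * f x + ereal u * f y)"

definition lsc_fun :: "('a::topological_space \<Rightarrow> ereal) \<Rightarrow> bool" where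
  "lsc_fun f \<longleftrightarrow> (\<forall>t::ereal. closed {x. f x \<le> t})"

definition Gamma0 :: "('a::real_normed_vector \<Rightarrow> ereal) set" where
  "Gamma0 = {f. proper_fun f \<and> convex_fun f \<and> lsc_fun f}"

text \<open>prox_f(x): the (for f in Gamma0, unique) minimiser of f(y) + 1/2 ||x - y||^2.\<close>
definition prox :: "('a::real_inner \<Rightarrow> ereal) \<Rightarrow> 'a \<Rightarrow> 'a" where
  "prox f x = (THE p. \<forall>y. f p + ereal ((norm (x - p))\<^sup>2 / 2) \<le> f y + ereal ((norm (x - y))\<^sup>2 / 2))"

definition support_fun :: "'a::real_inner set \<Rightarrow> 'a \<Rightarrow> ereal" where
  "support_fun C x = (SUP y\<in>C. ereal (inner y x))"

end

theory Submission
  imports Defs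
begin

text \<open>For \<open>f = \<sigma>\<^sub>C + c\<close> the subgradient inequality identifies \<open>prox\<^sub>f\<close> as \<open>Id - P\<^sub>C\<close>,
  whose norm is \<open>d\<^sub>C\<close>. Conversely, if \<open>\<parallel>prox\<^sub>f x\<parallel> = d\<^sub>C(x)\<close>, then \<open>prox\<^sub>f\<close> vanishes on \<open>C\<close>, so
  every \<open>y \<in> C\<close> is a subgradient of \<open>f\<close> at \<open>0\<close> and \<open>f \<ge> \<sigma>\<^sub>C + f 0\<close>. Comparing this minorant
  with the subgradient inequality of \<open>prox\<^sub>f x\<close> at \<open>0\<close> forces \<open>prox\<^sub>f = Id - P\<^sub>C\<close>. On the range
  of \<open>Id - P\<^sub>C\<close> the same inequality gives \<open>f \<le> \<sigma>\<^sub>C + f 0\<close>, and this range approaches every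
  point of the domain of \<open>\<sigma>\<^sub>C\<close> with controlled values, so lower semicontinuity yields
  \<open>f = \<sigma>\<^sub>C + f 0\<close>. Existence of \<open>prox\<^sub>f\<close> (and thus of \<open>P\<^sub>C\<close>, the prox of the indicator of \<open>C\<close>)
  uses completeness: minimising sequences are Cauchy by convexity and the parallelogram law.\<close>

section \<open>Proximal points and subgradients\<close>

definition prox_minimizer :: "('a::real_inner \<Rightarrow> ereal) \<Rightarrow> 'a \<Rightarrow> 'a \<Rightarrow> bool" where
  "prox_minimizer f x p \<longleftrightarrow>
     (\<forall>y. f p + ereal ((norm (x - p))\<^sup>2 / 2) \<le> f y + ereal ((norm (x - y))\<^sup>2 / 2))"

definition is_subgradient :: "('a::real_inner \<Rightarrow> ereal) \<Rightarrow> 'a \<Rightarrow> 'a \<Rightarrow> bool" where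
  "is_subgradient f p g \<longleftrightarrow> \<bar>f p\<bar> \<noteq> \<infinity> \<and> (\<forall>w. f p + ereal (inner g (w - p)) \<le> f w)"

lemma prox_eq_The: "prox f x = (THE p. prox_minimizer f x p)"
  unfolding prox_def prox_minimizer_def by simp

lemma power2_norm_diff:
  fixes a b :: "'a::real_inner"
  shows "(norm (a - b))\<^sup>2 = (norm a)\<^sup>2 - 2 * inner a b + (norm b)\<^sup>2"
  using dot_norm_neg[of a b] by simp

lemma proper_fun_realE:
  assumes "proper_fun f" "f w \<noteq> \<infinity>"
  obtains b where "f w = ereal b"
  using assms by (cases "f w") (auto simp: proper_fun_def)

lemma is_subgradient_le:
  assumes "is_subgradient f p g" "f w = ereal b"
  shows "f p \<le> ereal (b + inner g (p - w))"
proof -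
  obtain a where a: "f p = ereal a"
    using assms(1) unfolding is_subgradient_def by (cases "f p") auto
  have "f p + ereal (inner g (w - p)) \<le> f w"
    using assms(1) unfolding is_subgradient_def by blast
  moreover have "inner g (p - w) = - inner g (w - p)"
    by (simp add: inner_diff_right)
  ultimately show ?thesis using a assms(2) by simp
qed

lemma le_if_forall_pos_le_add_mult:
  fixes u v D :: real
  assumes "\<And>t. 0 < t \<Longrightarrow> t \<le> 1 \<Longrightarrow> u \<le> v + t * D"
  shows "u \<le> v"
proof (rule field_le_epsilon)
  fix e :: real assume e: "0 < e"
  define t where "t = min 1 (e / (\<bar>D\<bar> + 1))"
  have t: "0 < t" "t \<le> 1" unfolding t_def using e by auto
  have "t * D \<le> t * \<bar>D\<bar>"
    using t by (simp add: mult_left_mono)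
  also have "\<dots> \<le> e / (\<bar>D\<bar> + 1) * \<bar>D\<bar>"
    unfolding t_def by (rule mult_right_mono) auto
  also have "\<dots> \<le> e" using e by (simp add: field_simps)
  finally show "u \<le> v + e" using assms[OF t] by simp
qed

lemma prox_minimizer_segment_le:
  assumes cv: "convex_fun f" and m: "prox_minimizer f x p"
    and a: "f p = ereal a" and b: "f w = ereal b" and t: "0 < t" "t \<le> 1"
  shows "a + inner (x - p) (w - p) \<le> b + t * ((norm (w - p))\<^sup>2 / 2)"
proof -
  define k where "k = inner (x - p) (w - p)"
  define D where "D = (norm (w - p))\<^sup>2"
  define wt where "wt = (1 - t) *\<^sub>R p + t *\<^sub>R w"
  have "f wt \<le> ereal (1 - t) * f p + ereal t * f w"
    using cv t unfolding convex_fun_def wt_def by auto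
  then have fwt: "f wt \<le> ereal ((1 - t) * a + t * b)"
    using a b by simp
  have "ereal (a + (norm (x - p))\<^sup>2 / 2) = f p + ereal ((norm (x - p))\<^sup>2 / 2)"
    using a by simp
  also have "\<dots> \<le> f wt + ereal ((norm (x - wt))\<^sup>2 / 2)"
    using m unfolding prox_minimizer_def by blast
  also have "\<dots> \<le> ereal ((1 - t) * a + t * b) + ereal ((norm (x - wt))\<^sup>2 / 2)"
    using fwt by (rule add_right_mono)
  finally have "a + (norm (x - p))\<^sup>2 / 2 \<le> (1 - t) * a + t * b + (norm (x - wt))\<^sup>2 / 2"
    by simp
  moreover have "x - wt = (x - p) - t *\<^sub>R (w - p)"
    unfolding wt_def by (simp add: algebra_simps)
  then have "(norm (x - wt))\<^sup>2 = (norm (x - p))\<^sup>2 - 2 * (t * k) + t * (t * D)"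
    unfolding k_def D_def power2_norm_diff[of "x - p" "t *\<^sub>R (w - p)", folded \<open>x - wt = _\<close>]
    by (simp add: power_mult_distrib power2_eq_square)
  ultimately have "t * (a + k) \<le> t * (b + t * (D / 2))"
    by (simp add: field_simps)
  then show ?thesis unfolding k_def D_def using t by simp
qed

lemma prox_minimizer_subgradient:
  assumes pr: "proper_fun f" and cv: "convex_fun f" and m: "prox_minimizer f x p"
  shows "is_subgradient f p (x - p)"
proof -
  obtain w0 where "f w0 \<noteq> \<infinity>" using pr unfolding proper_fun_def by auto
  moreover have "f p + ereal ((norm (x - p))\<^sup>2 / 2) \<le> f w0 + ereal ((norm (x - w0))\<^sup>2 / 2)"
    using m unfolding prox_minimizer_def by blast
  ultimately have "f p \<noteq> \<infinity>" by auto
  then obtain a where a: "f p = ereal a" by (rule proper_fun_realE[OF pr])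
  have "ereal (a + inner (x - p) (w - p)) \<le> f w" for w
  proof (cases "f w = \<infinity>")
    case False
    then obtain b where b: "f w = ereal b" by (rule proper_fun_realE[OF pr])
    have "a + inner (x - p) (w - p) \<le> b"
      using prox_minimizer_segment_le[OF cv m a b] by (rule le_if_forall_pos_le_add_mult)
    then show ?thesis using b by simp
  qed simp
  then show ?thesis using a unfolding is_subgradient_def by simp
qed

lemma is_subgradient_prox_objective:
  assumes "is_subgradient f p (x - p)"
  shows "f p + ereal ((norm (x - p))\<^sup>2 / 2 + (norm (w - p))\<^sup>2 / 2) \<le> f w + ereal ((norm (x - w))\<^sup>2 / 2)"
proof -
  obtain a where a: "f p = ereal a"
    using assms unfolding is_subgradient_def by (cases "f p") auto
  have "f p + ereal (inner (x - p) (w - p)) \<le> f w"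
    using assms unfolding is_subgradient_def by blast
  then have "f p + ereal (inner (x - p) (w - p)) + ereal ((norm (x - w))\<^sup>2 / 2) \<le> f w + ereal ((norm (x - w))\<^sup>2 / 2)"
    by (rule add_right_mono)
  moreover have "(norm (x - w))\<^sup>2 = (norm (x - p))\<^sup>2 - 2 * inner (x - p) (w - p) + (norm (w - p))\<^sup>2"
    using power2_norm_diff[of "x - p" "w - p"] by simp
  then have "f p + ereal (inner (x - p) (w - p)) + ereal ((norm (x - w))\<^sup>2 / 2)
      = f p + ereal ((norm (x - p))\<^sup>2 / 2 + (norm (w - p))\<^sup>2 / 2)"
    using a by (simp add: field_simps)
  ultimately show ?thesis by simp
qed

lemma prox_eqI:
  assumes "is_subgradient f p (x - p)"
  shows "prox f x = p"
  unfolding prox_eq_The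
proof (rule the_equality)
  show "prox_minimizer f x p"
    unfolding prox_minimizer_def
  proof
    fix w
    have "f p + ereal ((norm (x - p))\<^sup>2 / 2) \<le> f p + ereal ((norm (x - p))\<^sup>2 / 2 + (norm (w - p))\<^sup>2 / 2)"
      by (intro add_left_mono) simp
    also have "\<dots> \<le> f w + ereal ((norm (x - w))\<^sup>2 / 2)"
      using assms by (rule is_subgradient_prox_objective)
    finally show "f p + ereal ((norm (x - p))\<^sup>2 / 2) \<le> f w + ereal ((norm (x - w))\<^sup>2 / 2)" .
  qed
next
  fix q assume "prox_minimizer f x q"
  then have "f q + ereal ((norm (x - q))\<^sup>2 / 2) \<le> f p + ereal ((norm (x - p))\<^sup>2 / 2)"
    unfolding prox_minimizer_def by blast
  with is_subgradient_prox_objective[OF assms, of q]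
  have "f p + ereal ((norm (x - p))\<^sup>2 / 2 + (norm (q - p))\<^sup>2 / 2) \<le> f p + ereal ((norm (x - p))\<^sup>2 / 2)"
    by (rule order_trans)
  moreover obtain a where "f p = ereal a"
    using assms unfolding is_subgradient_def by (cases "f p") auto
  ultimately have "(norm (q - p))\<^sup>2 \<le> 0"
    by simp
  then show "q = p" by simp
qed

section \<open>Existence of proximal points\<close>

lemma lsc_fun_bounded_below_near:
  fixes f :: "'a::metric_space \<Rightarrow> ereal"
  assumes "lsc_fun f" "f w0 = ereal a"
  obtains d where "d > 0" "\<And>w. dist w w0 < d \<Longrightarrow> ereal (a - 1) < f w"
proof -
  have "open (- {w. f w \<le> ereal (a - 1)})"
    using assms(1) unfolding lsc_fun_def by blast
  moreover have "w0 \<in> - {w. f w \<le> ereal (a - 1)}"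
    using assms(2) by simp
  ultimately obtain d where "d > 0" "ball w0 d \<subseteq> - {w. f w \<le> ereal (a - 1)}"
    unfolding open_contains_ball by blast
  then show ?thesis
  proof (intro that)
    fix w assume "dist w w0 < d"
    then have "w \<in> ball w0 d" by (simp add: dist_commute)
    with \<open>ball w0 d \<subseteq> _\<close> show "ereal (a - 1) < f w" by auto
  qed
qed

text \<open>Evaluate convexity on the segment from \<open>w0\<close> to \<open>w\<close> at distance \<open>d / 2\<close> from \<open>w0\<close>.\<close>
lemma convex_fun_lower_bound_from_ball:
  fixes f :: "'a::real_normed_vector \<Rightarrow> ereal"
  assumes pr: "proper_fun f" and cv: "convex_fun f" and a: "f w0 = ereal a" and d: "d > 0"
    and near: "\<And>w. dist w w0 < d \<Longrightarrow> ereal (a - 1) < f w"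
  shows "ereal (a - 1 - 2 / d * norm (w - w0)) \<le> f w"
proof (cases "dist w w0 < d")
  case True
  have "ereal (a - 1 - 2 / d * norm (w - w0)) \<le> ereal (a - 1)" using d by simp
  also have "\<dots> \<le> f w" using near[OF True] by (rule less_imp_le)
  finally show ?thesis .
next
  case False
  define n where "n = norm (w - w0)"
  have nd: "d \<le> n" using False unfolding n_def by (simp add: dist_norm)
  define t where "t = d / (2 * n)"
  have t: "0 < t" "t \<le> 1" unfolding t_def using nd d by (auto simp: field_simps)
  define u where "u = (1 - t) *\<^sub>R w0 + t *\<^sub>R w"
  have "u - w0 = t *\<^sub>R (w - w0)" unfolding u_def by (simp add: algebra_simps)
  then have "dist u w0 = t * n"
    unfolding dist_norm n_def using t by simp
  also have "\<dots> = d / 2"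
    unfolding t_def using nd d by (simp add: field_simps)
  finally have "dist u w0 = d / 2" .
  then have "ereal (a - 1) < f u" using d by (intro near) simp
  also have "f u \<le> ereal (1 - t) * f w0 + ereal t * f w"
    using cv t unfolding convex_fun_def u_def by auto
  finally have lt: "ereal (a - 1) < ereal (1 - t) * ereal a + ereal t * f w"
    unfolding a .
  show ?thesis
  proof (cases "f w = \<infinity>")
    case False
    then obtain b where b: "f w = ereal b" by (rule proper_fun_realE[OF pr])
    have "t * (a - 1 / t) < t * b" using lt b t by (simp add: algebra_simps)
    then have "a - 1 / t < b" using t by simp
    moreover have "1 / t = 2 / d * n" unfolding t_def using nd d by (simp add: field_simps)
    ultimately show ?thesis using b n_def by simp
  qed simp
qed

lemma Gamma0_lower_bound:
  assumes "f \<in> Gamma0"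
  shows "\<exists>w0 a K. 0 \<le> K \<and> (\<forall>w. ereal (a - K * norm (w - w0)) \<le> f w)"
proof -
  have pr: "proper_fun f" and cv: "convex_fun f" and ls: "lsc_fun f"
    using assms unfolding Gamma0_def by auto
  obtain w0 where "f w0 \<noteq> \<infinity>" using pr unfolding proper_fun_def by auto
  then obtain a where a: "f w0 = ereal a" by (rule proper_fun_realE[OF pr])
  obtain d where d: "d > 0" and near: "\<And>w. dist w w0 < d \<Longrightarrow> ereal (a - 1) < f w"
    using lsc_fun_bounded_below_near[OF ls a] by blast
  have "ereal (a - 1 - 2 / d * norm (w - w0)) \<le> f w" for w
    by (rule convex_fun_lower_bound_from_ball[OF pr cv a d near])
  moreover have "0 \<le> 2 / d" using d by simp
  ultimately show ?thesis by blast
qed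

lemma prox_objective_bounded_below:
  assumes "f \<in> Gamma0"
  shows "\<exists>L. \<forall>w. ereal L \<le> f w + ereal ((norm (x - w))\<^sup>2 / 2)"
proof -
  obtain w0 a K where K: "0 \<le> K" and low: "\<And>w. ereal (a - K * norm (w - w0)) \<le> f w"
    using Gamma0_lower_bound[OF assms] by blast
  have "ereal (a - K * norm (x - w0) - K\<^sup>2 / 2) \<le> f w + ereal ((norm (x - w))\<^sup>2 / 2)" for w
  proof -
    have "w - w0 = (x - w0) - (x - w)" by simp
    then have "norm (w - w0) \<le> norm (x - w0) + norm (x - w)"
      by (metis norm_triangle_ineq4)
    then have "K * norm (w - w0) \<le> K * norm (x - w0) + K * norm (x - w)"
      using K by (metis distrib_left mult_left_mono)
    moreover have "K * norm (x - w) \<le> K\<^sup>2 / 2 + (norm (x - w))\<^sup>2 / 2"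
      using zero_le_power2[of "norm (x - w) - K"] unfolding power2_diff by (simp add: field_simps)
    ultimately have "a - K * norm (x - w0) - K\<^sup>2 / 2 \<le> a - K * norm (w - w0) + (norm (x - w))\<^sup>2 / 2"
      by linarith
    then have "ereal (a - K * norm (x - w0) - K\<^sup>2 / 2)
        \<le> ereal (a - K * norm (w - w0)) + ereal ((norm (x - w))\<^sup>2 / 2)"
      by simp
    also have "\<dots> \<le> f w + ereal ((norm (x - w))\<^sup>2 / 2)"
      using low by (rule add_right_mono)
    finally show ?thesis .
  qed
  then show ?thesis by blast
qed

lemma power2_norm_midpoint:
  fixes u v :: "'a::real_inner"
  shows "(norm ((1/2) *\<^sub>R (u + v)))\<^sup>2 = (norm u)\<^sup>2 / 2 + (norm v)\<^sup>2 / 2 - (norm (u - v))\<^sup>2 / 4"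
  unfolding power2_norm_eq_inner
  by (simp add: inner_add_left inner_add_right inner_diff_left inner_diff_right inner_commute field_simps)

text \<open>Convexity at the midpoint of \<open>a\<close> and \<open>b\<close>, combined with the parallelogram law.\<close>
lemma prox_objective_midpoint_bound:
  fixes f :: "'a::real_inner \<Rightarrow> ereal"
  assumes cv: "convex_fun f"
    and low: "\<And>w. ereal \<mu> \<le> f w + ereal ((norm (x - w))\<^sup>2 / 2)"
    and A: "f a + ereal ((norm (x - a))\<^sup>2 / 2) = ereal A"
    and B: "f b + ereal ((norm (x - b))\<^sup>2 / 2) = ereal B"
  shows "(norm (a - b))\<^sup>2 \<le> 4 * (A - \<mu>) + 4 * (B - \<mu>)"
proof -
  have fa: "f a = ereal (A - (norm (x - a))\<^sup>2 / 2)" using A by (cases "f a") auto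
  have fb: "f b = ereal (B - (norm (x - b))\<^sup>2 / 2)" using B by (cases "f b") auto
  define m where "m = (1 - 1/2) *\<^sub>R a + (1/2::real) *\<^sub>R b"
  have "f m \<le> ereal (1 - 1/2) * f a + ereal (1/2) * f b"
    using cv[unfolded convex_fun_def, rule_format, of "1/2" a b] unfolding m_def by simp
  then have fm: "f m \<le> ereal ((A - (norm (x - a))\<^sup>2 / 2) / 2 + (B - (norm (x - b))\<^sup>2 / 2) / 2)"
    using fa fb by simp
  have "ereal \<mu> \<le> f m + ereal ((norm (x - m))\<^sup>2 / 2)" by (rule low)
  also have "\<dots> \<le> ereal ((A - (norm (x - a))\<^sup>2 / 2) / 2 + (B - (norm (x - b))\<^sup>2 / 2) / 2)
      + ereal ((norm (x - m))\<^sup>2 / 2)"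
    using fm by (rule add_right_mono)
  finally have \<mu>: "\<mu> \<le> (A - (norm (x - a))\<^sup>2 / 2) / 2 + (B - (norm (x - b))\<^sup>2 / 2) / 2
      + (norm (x - m))\<^sup>2 / 2"
    by simp
  have "x - m = (1/2) *\<^sub>R ((x - a) + (x - b))"
    unfolding m_def by (simp add: algebra_simps flip: scaleR_add_left)
  then have "(norm (x - m))\<^sup>2 = (norm (x - a))\<^sup>2 / 2 + (norm (x - b))\<^sup>2 / 2 - (norm (a - b))\<^sup>2 / 4"
    using power2_norm_midpoint[of "x - a" "x - b"] by (simp add: norm_minus_commute)
  with \<mu> show ?thesis by (simp add: field_simps)
qed

lemma Cauchy_if_dist_square_le:
  fixes X :: "nat \<Rightarrow> 'a::metric_space"
  assumes bound: "\<And>m n. (dist (X m) (X n))\<^sup>2 \<le> e m + e n" and e: "e \<longlonglongrightarrow> 0"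
  shows "Cauchy X"
proof (rule metric_CauchyI)
  fix \<epsilon> :: real assume "0 < \<epsilon>"
  then have "eventually (\<lambda>n. e n < \<epsilon>\<^sup>2 / 2) sequentially"
    using order_tendstoD(2)[OF e, of "\<epsilon>\<^sup>2 / 2"] by simp
  then obtain M where M: "\<And>n. M \<le> n \<Longrightarrow> e n < \<epsilon>\<^sup>2 / 2"
    unfolding eventually_sequentially by blast
  have "dist (X m) (X n) < \<epsilon>" if "M \<le> m" "M \<le> n" for m n
  proof -
    have "(dist (X m) (X n))\<^sup>2 < \<epsilon>\<^sup>2"
      using bound[of m n] M[OF that(1)] M[OF that(2)] by simp
    then show ?thesis using \<open>0 < \<epsilon>\<close> by (simp add: power_less_imp_less_base)
  qed
  then show "\<exists>M. \<forall>m\<ge>M. \<forall>n\<ge>M. dist (X m) (X n) < \<epsilon>" by blast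
qed

lemma lsc_fun_tendsto_le:
  fixes f :: "'a::metric_space \<Rightarrow> ereal"
  assumes ls: "lsc_fun f" and X: "X \<longlonglongrightarrow> y" and g: "g \<longlonglongrightarrow> L"
    and le: "\<And>n. f (X n) \<le> ereal (g n)"
  shows "f y \<le> ereal L"
proof (rule ereal_le_epsilon2)
  fix e :: real assume "0 < e"
  then have "eventually (\<lambda>n. g n < L + e) sequentially"
    using order_tendstoD(2)[OF g] by simp
  then have "eventually (\<lambda>n. X n \<in> {w. f w \<le> ereal (L + e)}) sequentially"
  proof eventually_elim
    case (elim n)
    then have "ereal (g n) \<le> ereal (L + e)" by simp
    then show ?case using order_trans[OF le[of n]] by simp
  qed
  moreover have "closed {w. f w \<le> ereal (L + e)}"
    using ls unfolding lsc_fun_def by blast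
  ultimately have "y \<in> {w. f w \<le> ereal (L + e)}"
    using Lim_in_closed_set[OF _ _ _ X] by (metis trivial_limit_sequentially)
  then have "f y \<le> ereal (L + e)" by simp
  then show "f y \<le> ereal L + ereal e" by simp
qed

lemma prox_objective_INF_finite:
  assumes G: "f \<in> Gamma0"
  shows "\<exists>\<mu>. (INF w. f w + ereal ((norm (x - w))\<^sup>2 / 2)) = ereal \<mu>"
proof -
  define F where "F w = f w + ereal ((norm (x - w))\<^sup>2 / 2)" for w
  obtain L where L: "\<And>w. ereal L \<le> F w"
    using prox_objective_bounded_below[OF G] unfolding F_def by blast
  have pr: "proper_fun f" using G unfolding Gamma0_def by auto
  then obtain w0 where "f w0 \<noteq> \<infinity>" unfolding proper_fun_def by auto
  then obtain b where b: "f w0 = ereal b" by (rule proper_fun_realE[OF pr])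
  have "(INF w. F w) \<le> F w0" by (rule INF_lower) simp
  also have "\<dots> < \<infinity>" unfolding F_def b by simp
  finally have "(INF w. F w) < \<infinity>" .
  moreover have "ereal L \<le> (INF w. F w)" by (rule INF_greatest) (rule L)
  ultimately have "\<exists>\<mu>. (INF w. F w) = ereal \<mu>" by (cases "INF w. F w") auto
  then show ?thesis unfolding F_def .
qed

lemma ereal_INF_minimizing_sequence:
  fixes F :: "'a \<Rightarrow> ereal"
  assumes \<mu>: "(INF w. F w) = ereal \<mu>"
  shows "\<exists>ws A. (\<forall>n. F (ws n) = ereal (A n)) \<and> A \<longlonglongrightarrow> \<mu>"
proof -
  have low: "ereal \<mu> \<le> F w" for w unfolding \<mu>[symmetric] by (rule INF_lower) simp
  have "\<exists>w. F w < ereal (\<mu> + inverse (real (Suc n)))" for n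
  proof -
    have "(INF w. F w) < ereal (\<mu> + inverse (real (Suc n)))" unfolding \<mu> by simp
    then show ?thesis unfolding INF_less_iff by blast
  qed
  then obtain ws where ws: "\<And>n. F (ws n) < ereal (\<mu> + inverse (real (Suc n)))" by metis
  define A where "A n = real_of_ereal (F (ws n))" for n
  have FA: "F (ws n) = ereal (A n)" for n
    using ws[of n] low[of "ws n"] unfolding A_def by (cases "F (ws n)") auto
  have A: "\<mu> \<le> A n" "A n \<le> \<mu> + inverse (real (Suc n))" for n
    using ws[of n] low[of "ws n"] unfolding FA by auto
  have "(\<lambda>n. \<mu> + inverse (real (Suc n))) \<longlonglongrightarrow> \<mu> + 0"
    by (intro tendsto_add tendsto_const LIMSEQ_inverse_real_of_nat)
  then have "A \<longlonglongrightarrow> \<mu>"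
    using A by (intro tendsto_sandwich[of "\<lambda>_. \<mu>" A _ "\<lambda>n. \<mu> + inverse (real (Suc n))"]) simp_all
  with FA show ?thesis by blast
qed

lemma prox_minimizer_exists:
  fixes f :: "'a::{real_inner,complete_space} \<Rightarrow> ereal"
  assumes G: "f \<in> Gamma0"
  shows "\<exists>p. prox_minimizer f x p"
proof -
  have cv: "convex_fun f" and ls: "lsc_fun f"
    using G unfolding Gamma0_def by auto
  define F where "F w = f w + ereal ((norm (x - w))\<^sup>2 / 2)" for w
  obtain \<mu> where \<mu>: "(INF w. F w) = ereal \<mu>"
    using prox_objective_INF_finite[OF G] unfolding F_def by blast
  have low: "ereal \<mu> \<le> F w" for w unfolding \<mu>[symmetric] by (rule INF_lower) simp
  obtain ws A where FA: "\<And>n. F (ws n) = ereal (A n)" and "A \<longlonglongrightarrow> \<mu>"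
    using ereal_INF_minimizing_sequence[OF \<mu>] by blast
  have "Cauchy ws"
  proof (rule Cauchy_if_dist_square_le)
    show "(dist (ws m) (ws n))\<^sup>2 \<le> 4 * (A m - \<mu>) + 4 * (A n - \<mu>)" for m n
      unfolding dist_norm
      by (rule prox_objective_midpoint_bound[OF cv low[unfolded F_def] FA[unfolded F_def] FA[unfolded F_def]])
    have "(\<lambda>n. 4 * (A n - \<mu>)) \<longlonglongrightarrow> 4 * (\<mu> - \<mu>)"
      by (intro tendsto_intros \<open>A \<longlonglongrightarrow> \<mu>\<close>)
    then show "(\<lambda>n. 4 * (A n - \<mu>)) \<longlonglongrightarrow> 0" by simp
  qed
  then obtain p where p: "ws \<longlonglongrightarrow> p" using Cauchy_convergent_iff convergent_def by blast
  have "f p \<le> ereal (\<mu> - (norm (x - p))\<^sup>2 / 2)"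
  proof (rule lsc_fun_tendsto_le[OF ls p])
    show "(\<lambda>n. A n - (norm (x - ws n))\<^sup>2 / 2) \<longlonglongrightarrow> \<mu> - (norm (x - p))\<^sup>2 / 2"
      by (intro tendsto_intros \<open>A \<longlonglongrightarrow> \<mu>\<close> p) simp
    show "f (ws n) \<le> ereal (A n - (norm (x - ws n))\<^sup>2 / 2)" for n
      using FA[of n] unfolding F_def by (cases "f (ws n)") auto
  qed
  then have "F p \<le> ereal \<mu>" unfolding F_def by (cases "f p") auto
  then have "F p \<le> F w" for w using low[of w] by (rule order_trans)
  then show ?thesis unfolding prox_minimizer_def F_def by blast
qed

lemma prox_subgradient:
  fixes f :: "'a::{real_inner,complete_space} \<Rightarrow> ereal"
  assumes "f \<in> Gamma0"
  shows "is_subgradient f (prox f x) (x - prox f x)"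
proof -
  obtain p where p: "prox_minimizer f x p" using prox_minimizer_exists[OF assms] by blast
  then have "is_subgradient f p (x - p)"
    using assms unfolding Gamma0_def by (blast intro: prox_minimizer_subgradient)
  moreover from this have "prox f x = p" by (rule prox_eqI)
  ultimately show ?thesis by simp
qed

section \<open>Projections and support functions\<close>

definition indicator_ereal :: "'a set \<Rightarrow> 'a \<Rightarrow> ereal" where
  "indicator_ereal C w = (if w \<in> C then 0 else \<infinity>)"

lemma Gamma0_indicator_ereal:
  fixes C :: "'a::real_normed_vector set"
  assumes "C \<noteq> {}" "closed C" "convex C"
  shows "indicator_ereal C \<in> Gamma0"
proof -
  have "proper_fun (indicator_ereal C)"
    using assms(1) unfolding proper_fun_def indicator_ereal_def by auto
  moreover have "convex_fun (indicator_ereal C)"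
    unfolding convex_fun_def
  proof (intro allI impI)
    fix x y :: 'a and u :: real assume u: "0 \<le> u \<and> u \<le> 1"
    consider "x \<in> C" "y \<in> C" | "u = 0" | "u = 1" | "x \<notin> C \<or> y \<notin> C" "0 < u" "u < 1"
      using u by fastforce
    then show "indicator_ereal C ((1 - u) *\<^sub>R x + u *\<^sub>R y)
        \<le> ereal (1 - u) * indicator_ereal C x + ereal u * indicator_ereal C y"
    proof cases
      case 1
      then have "(1 - u) *\<^sub>R x + u *\<^sub>R y \<in> C" using assms(3) u unfolding convex_def by auto
      then show ?thesis using 1 unfolding indicator_ereal_def by simp
    qed (auto simp: indicator_ereal_def)
  qed
  moreover have "lsc_fun (indicator_ereal C)"
    unfolding lsc_fun_def
  proof
    fix t :: ereal
    have "{x. indicator_ereal C x \<le> t} = (if t = \<infinity> then UNIV else if 0 \<le> t then C else {})"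
      by (auto simp: indicator_ereal_def)
    then show "closed {x. indicator_ereal C x \<le> t}" using assms(2) by simp
  qed
  ultimately show ?thesis unfolding Gamma0_def by blast
qed

text \<open>The projection onto \<open>C\<close> is the prox of its indicator, which exists by completeness.\<close>
lemma closed_convex_projection_exists:
  fixes C :: "'a::{real_inner,complete_space} set"
  assumes "C \<noteq> {}" "closed C" "convex C"
  shows "\<exists>r\<in>C. \<forall>w\<in>C. inner (x - r) (w - r) \<le> 0"
proof -
  define r where "r = prox (indicator_ereal C) x"
  have sub: "is_subgradient (indicator_ereal C) r (x - r)"
    unfolding r_def by (rule prox_subgradient[OF Gamma0_indicator_ereal[OF assms]])
  then have "r \<in> C"
    unfolding is_subgradient_def indicator_ereal_def by (auto split: if_splits)
  moreover have "inner (x - r) (w - r) \<le> 0" if "w \<in> C" for w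
    using sub \<open>r \<in> C\<close> that unfolding is_subgradient_def indicator_ereal_def
    by (metis (full_types) ereal_less_eq(3) zero_ereal_def plus_ereal.simps(1) add_0)
  ultimately show ?thesis by blast
qed

lemma infdist_eq_norm_projection:
  fixes C :: "'a::real_inner set"
  assumes r: "r \<in> C" and vi: "\<forall>w\<in>C. inner (x - r) (w - r) \<le> 0"
  shows "infdist x C = norm (x - r)"
proof (rule antisym)
  show "infdist x C \<le> norm (x - r)" using infdist_le[OF r] by (simp add: dist_norm)
next
  have "norm (x - r) \<le> dist x w" if w: "w \<in> C" for w
  proof -
    have "(norm (x - w))\<^sup>2 = (norm (x - r))\<^sup>2 - 2 * inner (x - r) (w - r) + (norm (w - r))\<^sup>2"
      using power2_norm_diff[of "x - r" "w - r"] by simp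
    moreover have "inner (x - r) (w - r) \<le> 0" using vi w by blast
    moreover have "0 \<le> (norm (w - r))\<^sup>2" by simp
    ultimately have "(norm (x - r))\<^sup>2 \<le> (norm (x - w))\<^sup>2" by linarith
    then show ?thesis unfolding dist_norm by (rule power2_le_imp_le) simp
  qed
  then show "norm (x - r) \<le> infdist x C"
    unfolding infdist_def using r by (auto intro: cINF_greatest)
qed

lemma support_fun_upper: "y \<in> C \<Longrightarrow> ereal (inner y w) \<le> support_fun C w"
  unfolding support_fun_def by (rule SUP_upper)

lemma support_fun_least: "(\<And>y. y \<in> C \<Longrightarrow> inner y w \<le> B) \<Longrightarrow> support_fun C w \<le> ereal B"
  unfolding support_fun_def by (rule SUP_least) simp

lemma support_fun_nonneg: "0 \<in> C \<Longrightarrow> 0 \<le> support_fun C w"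
  using support_fun_upper[of 0 C w] by (simp add: zero_ereal_def)

section \<open>Functions whose prox has norm \<open>d\<^sub>C\<close>\<close>

text \<open>\<open>r\<close> attains \<open>\<sigma>\<^sub>C (x - r)\<close>, hence is a subgradient of \<open>\<sigma>\<^sub>C\<close> at \<open>x - r\<close>.\<close>
lemma prox_support_fun_plus_const:
  assumes r: "r \<in> C" and vi: "\<forall>w\<in>C. inner (x - r) (w - r) \<le> 0"
  shows "prox (\<lambda>w. support_fun C w + ereal c) x = x - r"
proof (rule prox_eqI)
  have "support_fun C (x - r) \<le> ereal (inner r (x - r))"
  proof (rule support_fun_least)
    fix w assume "w \<in> C"
    then have "inner (x - r) (w - r) \<le> 0" using vi by blast
    then show "inner w (x - r) \<le> inner r (x - r)"
      by (simp add: inner_diff_left inner_commute)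
  qed
  then have \<sigma>: "support_fun C (x - r) = ereal (inner r (x - r))"
    using support_fun_upper[OF r] by (rule antisym)
  have "ereal (inner r (x - r) + c + inner r (w - (x - r))) \<le> support_fun C w + ereal c" for w
  proof -
    have "ereal (inner r w) + ereal c \<le> support_fun C w + ereal c"
      using support_fun_upper[OF r] by (rule add_right_mono)
    moreover have eq: "inner r (x - r) + c + inner r (w - (x - r)) = inner r w + c"
      by (simp add: inner_diff_right)
    ultimately show ?thesis unfolding eq by simp
  qed
  then show "is_subgradient (\<lambda>w. support_fun C w + ereal c) (x - r) (x - (x - r))"
    unfolding is_subgradient_def \<sigma> by simp
qed

lemma norm_prox_support_fun_plus_const:
  fixes C :: "'a::{real_inner,complete_space} set"
  assumes "C \<noteq> {}" "closed C" "convex C"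
  shows "norm (prox (\<lambda>w. support_fun C w + ereal c) x) = infdist x C"
proof -
  obtain r where "r \<in> C" "\<forall>w\<in>C. inner (x - r) (w - r) \<le> 0"
    using closed_convex_projection_exists[OF assms] by blast
  then show ?thesis
    using prox_support_fun_plus_const infdist_eq_norm_projection by metis
qed

lemma support_fun_plus_le_if_prox_zero:
  fixes f :: "'a::{real_inner,complete_space} \<Rightarrow> ereal"
  assumes G: "f \<in> Gamma0" and zero: "\<And>y. y \<in> C \<Longrightarrow> prox f y = 0" and c: "f 0 = ereal c"
  shows "support_fun C w + ereal c \<le> f w"
proof (cases "f w")
  case (real b)
  have "inner y w \<le> b - c" if "y \<in> C" for y
  proof -
    have "is_subgradient f 0 y"
      using prox_subgradient[OF G, of y] zero[OF that] by simp
    then have "f 0 + ereal (inner y w) \<le> f w"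
      unfolding is_subgradient_def by (metis diff_zero)
    then show ?thesis using real c by simp
  qed
  then have "support_fun C w \<le> ereal (b - c)" by (rule support_fun_least)
  then show ?thesis using real by (cases "support_fun C w") auto
qed (use G in \<open>auto simp: Gamma0_def proper_fun_def\<close>)

text \<open>Comparing the minorant \<open>\<sigma>\<^sub>C + f 0\<close> with the subgradient inequality of the prox at \<open>0\<close>
  gives \<open>\<parallel>p\<parallel>\<^sup>2 \<le> \<langle>x - r, p\<rangle>\<close> for \<open>p = prox f x\<close>; together with \<open>\<parallel>x - r\<parallel> \<le> \<parallel>p\<parallel>\<close> this forces
  \<open>p = x - r\<close>.\<close>
lemma prox_eq_diff_if_support_fun_minorant:
  fixes f :: "'a::{real_inner,complete_space} \<Rightarrow> ereal"
  assumes G: "f \<in> Gamma0" and c: "f 0 = ereal c"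
    and minorant: "\<And>w. support_fun C w + ereal c \<le> f w"
    and r: "r \<in> C" and norm_le: "norm (x - r) \<le> norm (prox f x)"
  shows "prox f x = x - r"
proof -
  define p where "p = prox f x"
  have "ereal (inner r p) + ereal c \<le> support_fun C p + ereal c"
    using support_fun_upper[OF r] by (rule add_right_mono)
  also have "\<dots> \<le> f p" by (rule minorant)
  also have "f p \<le> ereal (c + inner (x - p) p)"
    using is_subgradient_le[OF prox_subgradient[OF G] c] unfolding p_def by simp
  finally have "inner r p + c \<le> c + inner (x - p) p" by simp
  then have "(norm p)\<^sup>2 \<le> inner (x - r) p"
    by (simp add: inner_diff_left power2_norm_eq_inner)
  moreover have "(norm (p - (x - r)))\<^sup>2 = (norm p)\<^sup>2 - 2 * inner p (x - r) + (norm (x - r))\<^sup>2"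
    by (rule power2_norm_diff)
  moreover have "(norm (x - r))\<^sup>2 \<le> (norm p)\<^sup>2"
    unfolding p_def by (rule power_mono[OF norm_le norm_ge_zero])
  moreover have "inner (x - r) p = inner p (x - r)" by (rule inner_commute)
  ultimately have "(norm (p - (x - r)))\<^sup>2 \<le> 0" by linarith
  then show ?thesis unfolding p_def by simp
qed

text \<open>If \<open>prox f\<close> is \<open>Id - P\<^sub>C\<close>, take \<open>\<lambda> > 0\<close> and \<open>q = P\<^sub>C (y / \<lambda>)\<close>: then \<open>p = y - \<lambda> q\<close> equals
  \<open>prox f (p + q)\<close>, hence \<open>f p \<le> f 0 + \<langle>q, p\<rangle> \<le> f 0 + \<sigma>\<^sub>C y\<close>, while \<open>\<parallel>p - y\<parallel>\<^sup>2 = \<lambda>\<^sup>2 \<parallel>q\<parallel>\<^sup>2 \<le> \<lambda> \<sigma>\<^sub>C y\<close>.\<close>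
lemma sublevel_point_near_if_prox_eq_residual:
  fixes f :: "'a::{real_inner,complete_space} \<Rightarrow> ereal"
  assumes C: "C \<noteq> {}" "closed C" "convex C" "0 \<in> C"
    and G: "f \<in> Gamma0" and c: "f 0 = ereal c"
    and proj: "\<And>x r. r \<in> C \<Longrightarrow> \<forall>w\<in>C. inner (x - r) (w - r) \<le> 0 \<Longrightarrow> prox f x = x - r"
    and s: "support_fun C y = ereal s" and l: "0 < l"
  shows "\<exists>p. f p \<le> ereal (c + s) \<and> (dist p y)\<^sup>2 \<le> l * s"
proof -
  obtain q where q: "q \<in> C" and vi: "\<forall>w\<in>C. inner ((1 / l) *\<^sub>R y - q) (w - q) \<le> 0"
    using closed_convex_projection_exists[OF C(1-3)] by blast
  define p where "p = y - l *\<^sub>R q"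
  have scaled: "(1 / l) *\<^sub>R y - q = (1 / l) *\<^sub>R ((p + q) - q)"
    unfolding p_def using l by (simp add: algebra_simps)
  have "\<forall>w\<in>C. inner ((p + q) - q) (w - q) \<le> 0"
    using vi l unfolding scaled by (simp add: divide_le_0_iff)
  then have "prox f (p + q) = p"
    using proj[OF q] by simp
  then have fp: "f p \<le> ereal (c + inner q p)"
    using is_subgradient_le[OF prox_subgradient[OF G, of "p + q"] c] by simp
  have "inner q y \<le> s"
    using support_fun_upper[OF q, of y] s by simp
  have "inner ((1 / l) *\<^sub>R y - q) (0 - q) \<le> 0"
    using vi C(4) by blast
  then have "(norm q)\<^sup>2 \<le> inner q y / l"
    by (simp add: inner_diff_left inner_diff_right power2_norm_eq_inner inner_commute)
  then have lq: "l * (norm q)\<^sup>2 \<le> s"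
    using l \<open>inner q y \<le> s\<close> by (simp add: field_simps)
  have "inner q p = inner q y - l * (norm q)\<^sup>2"
    unfolding p_def by (simp add: inner_diff_right power2_norm_eq_inner)
  moreover have "0 \<le> l * (norm q)\<^sup>2" using l by simp
  ultimately have "inner q p \<le> s"
    using \<open>inner q y \<le> s\<close> by linarith
  then have "f p \<le> ereal (c + s)"
    using fp by (simp add: order_trans)
  moreover have "(dist p y)\<^sup>2 = l * (l * (norm q)\<^sup>2)"
    unfolding p_def dist_norm using l by (simp add: power2_eq_square)
  then have "(dist p y)\<^sup>2 \<le> l * s"
    using lq l by simp
  ultimately show ?thesis by blast
qed

lemma le_support_fun_plus_if_prox_eq_residual:
  fixes f :: "'a::{real_inner,complete_space} \<Rightarrow> ereal"
  assumes C: "C \<noteq> {}" "closed C" "convex C" "0 \<in> C"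
    and G: "f \<in> Gamma0" and c: "f 0 = ereal c"
    and proj: "\<And>x r. r \<in> C \<Longrightarrow> \<forall>w\<in>C. inner (x - r) (w - r) \<le> 0 \<Longrightarrow> prox f x = x - r"
  shows "f y \<le> support_fun C y + ereal c"
proof (cases "support_fun C y")
  case (real s)
  have "0 \<le> s" using support_fun_nonneg[OF C(4), of y] real by simp
  have "\<exists>p\<in>{w. f w \<le> ereal (c + s)}. dist p y < e" if "0 < e" for e
  proof -
    define l where "l = e\<^sup>2 / (s + 1)"
    have "0 < l" unfolding l_def using \<open>0 < e\<close> \<open>0 \<le> s\<close> by simp
    then obtain p where p: "f p \<le> ereal (c + s)" "(dist p y)\<^sup>2 \<le> l * s"
      using sublevel_point_near_if_prox_eq_residual[OF C G c proj real] by blast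
    have "l * s < e\<^sup>2"
      unfolding l_def using \<open>0 < e\<close> \<open>0 \<le> s\<close> by (simp add: field_simps)
    with p(2) have "(dist p y)\<^sup>2 < e\<^sup>2" by linarith
    then have "dist p y < e"
      using \<open>0 < e\<close> by (meson less_imp_le power_less_imp_less_base)
    with p(1) show ?thesis by blast
  qed
  moreover have "closed {w. f w \<le> ereal (c + s)}"
    using G unfolding Gamma0_def lsc_fun_def by blast
  ultimately have "f y \<le> ereal (c + s)"
    using closed_approachable by blast
  then show ?thesis using real by (simp add: add.commute)
next
  case MInf
  then show ?thesis using support_fun_nonneg[OF C(4), of y] by simp
qed simp

lemma support_fun_plus_const_if_norm_prox_eq_infdist:
  fixes f :: "'a::{real_inner,complete_space} \<Rightarrow> ereal"
  assumes C: "C \<noteq> {}" "closed C" "convex C" "0 \<in> C"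
    and G: "f \<in> Gamma0" and H: "\<forall>x. norm (prox f x) = infdist x C"
  shows "\<exists>c. \<forall>x. f x = support_fun C x + ereal c"
proof -
  have zero: "prox f y = 0" if "y \<in> C" for y
    using H[rule_format, of y] that by simp
  have "\<bar>f 0\<bar> \<noteq> \<infinity>"
    using prox_subgradient[OF G, of 0] zero[OF C(4)] unfolding is_subgradient_def by simp
  then obtain c where c: "f 0 = ereal c" by (cases "f 0") auto
  have minorant: "support_fun C w + ereal c \<le> f w" for w
    using G zero c by (rule support_fun_plus_le_if_prox_zero)
  have proj: "prox f x = x - r" if r: "r \<in> C" "\<forall>w\<in>C. inner (x - r) (w - r) \<le> 0" for x r
    using G c minorant r(1)
  proof (rule prox_eq_diff_if_support_fun_minorant)
    show "norm (x - r) \<le> norm (prox f x)"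
      using H infdist_eq_norm_projection[OF r] by simp
  qed
  have "f w \<le> support_fun C w + ereal c" for w
    using C G c proj by (rule le_support_fun_plus_if_prox_eq_residual)
  with minorant have "\<forall>x. f x = support_fun C x + ereal c"
    by (blast intro: antisym)
  then show ?thesis ..
qed

theorem corollary1:
  fixes C :: "'a::{real_inner, complete_space} set"
    and f :: "'a \<Rightarrow> ereal"
  assumes "C \<noteq> {}" and "closed C" and "convex C" and "0 \<in> C"
    and "f \<in> Gamma0"
  shows "(\<forall>x. norm (prox f x) = infdist x C) \<longleftrightarrow>
         (\<exists>c::real. \<forall>x. f x = support_fun C x + ereal c)"
proof
  assume "\<forall>x. norm (prox f x) = infdist x C"
  with assms show "\<exists>c::real. \<forall>x. f x = support_fun C x + ereal c"
    by (rule support_fun_plus_const_if_norm_prox_eq_infdist)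
next
  assume "\<exists>c::real. \<forall>x. f x = support_fun C x + ereal c"
  then obtain c where "f = (\<lambda>x. support_fun C x + ereal c)" by blast
  with assms(1-3) show "\<forall>x. norm (prox f x) = infdist x C"
    by (simp add: norm_prox_support_fun_plus_const)
qed

end
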